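(* Let $n,d\ge1$, $p>d$, $\Delta\in\mathbb{R}^{nd\times nd}$ symmetric with $d\times d$ blocks, $\Delta_{ii}=0$, $Z^{\top}=[I_d,\dots,I_d]$, $A=ZZ^{\top}+\Delta$, $f(S)=\langle A,SS^{\top}\rangle$. Every first-order critical point $S$ of $f$ satisfies \[ \|SS^{\top}\|_F^2\ge\|Z^{\top}S\|_F^2-\frac1n\|\Delta S\|_F^2. \]
   Context: $S\in\mathbb{R}^{nd\times p}$ has $d\times p$ blocks $S_i$ with $S_iS_i^{\top}=I_d$; $A_{ij}=I_d+\Delta_{ij}$. $S$ is a first-order critical point if $\sum_jA_{ij}S_j=\Lambda_{ii}S_i$ for all $i$, where $\Lambda_{ii}=\frac12\sum_j(S_iS_j^{\top}A_{ji}+A_{ij}S_jS_i^{\top})$ (equivalently, the Riemannian gradient of $f$ on the product of Stiefel manifolds vanishes). *)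

theory Defs
  imports "HOL-Analysis.Analysis"
begin

text \<open>Block representation. The block index set is a finite type 'n (so n = CARD('n) \<ge> 1),
  blocks S i are d x p matrices (real^'p^'d), and Delta i j are the d x d blocks of Delta.\<close>

text \<open>Blocks of A = Z Z^T + Delta, where every block of Z Z^T is I_d.\<close>
definition blkA :: "('n::finite \<Rightarrow> 'n \<Rightarrow> real^'d::finite^'d) \<Rightarrow> 'n \<Rightarrow> 'n \<Rightarrow> real^'d^'d" where
  "blkA Dl i j = mat 1 + Dl i j"

definition Lam :: "('n::finite \<Rightarrow> 'n \<Rightarrow> real^'d::finite^'d) \<Rightarrow> ('n \<Rightarrow> real^'p::finite^'d)
                   \<Rightarrow> 'n \<Rightarrow> real^'d^'d" where
  "Lam Dl S i = (1/2) *\<^sub>R (\<Sum>j\<in>UNIV. S i ** transpose (S j) ** blkA Dl j i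
                                   + blkA Dl i j ** S j ** transpose (S i))"

definition first_order_critical :: "('n::finite \<Rightarrow> 'n \<Rightarrow> real^'d::finite^'d)
                   \<Rightarrow> ('n \<Rightarrow> real^'p::finite^'d) \<Rightarrow> bool" where
  "first_order_critical Dl S \<longleftrightarrow>
     (\<forall>i. (\<Sum>j\<in>UNIV. blkA Dl i j ** S j) = Lam Dl S i ** S i)"

definition frob2 :: "real^'c::finite^'r::finite \<Rightarrow> real" where
  "frob2 M = (\<Sum>i\<in>UNIV. \<Sum>j\<in>UNIV. (M $ i $ j)^2)"

end

theory Submission
  imports Defs
begin

text \<open>Write \<open>T = \<Sum>\<^sub>j S\<^sub>j\<close> and \<open>R\<^sub>i = \<Sum>\<^sub>j \<Delta>\<^sub>i\<^sub>j S\<^sub>j\<close>. Since every block of \<open>Z Z\<^sup>T\<close> is \<open>I\<^sub>d\<close>,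
  criticality says that \<open>T + R\<^sub>i = \<Lambda>\<^sub>i\<^sub>i S\<^sub>i\<close> lies in the row space of \<open>S\<^sub>i\<close>. Hence the
  components of \<open>T\<close> and \<open>-R\<^sub>i\<close> orthogonal to that row space coincide, and Pythagoras for the
  orthogonal projection \<open>S\<^sub>i\<^sup>T S\<^sub>i\<close> gives \<open>\<parallel>T\<parallel>\<^sup>2 \<le> \<parallel>T S\<^sub>i\<^sup>T\<parallel>\<^sup>2 + \<parallel>R\<^sub>i\<parallel>\<^sup>2\<close>. By Cauchy-Schwarz
  \<open>\<parallel>T S\<^sub>i\<^sup>T\<parallel>\<^sup>2 = \<parallel>\<Sum>\<^sub>j S\<^sub>j S\<^sub>i\<^sup>T\<parallel>\<^sup>2 \<le> n \<Sum>\<^sub>j \<parallel>S\<^sub>j S\<^sub>i\<^sup>T\<parallel>\<^sup>2\<close>; summing over \<open>i\<close> and dividing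
  by \<open>n\<close> gives the claim.\<close>

lemma matrix_add_rdistrib: "(A + B) ** C = A ** C + B ** C"
  by (vector matrix_matrix_mult_def sum.distrib[symmetric] field_simps)

lemma matrix_diff_rdistrib:
  fixes A B :: "'a::ring_1^'n^'m"
  shows "(A - B) ** C = A ** C - B ** C"
  by (vector matrix_matrix_mult_def sum_subtractf[symmetric] field_simps)

lemma matrix_sum_rdistrib: "(\<Sum>j\<in>J. A j) ** C = (\<Sum>j\<in>J. A j ** C)"
  by (induction J rule: infinite_finite_induct) (simp_all add: matrix_add_rdistrib)

lemma inner_matrix_mult_left:
  fixes A :: "real^'n^'m" and B :: "real^'p^'n"
  shows "(A ** B) \<bullet> C = A \<bullet> (C ** transpose B)"
proof -
  have "(A ** B) \<bullet> C = (\<Sum>i\<in>UNIV. \<Sum>k\<in>UNIV. \<Sum>j\<in>UNIV. A$i$j * B$j$k * C$i$k)"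
    by (simp add: inner_vec_def matrix_matrix_mult_def sum_distrib_right)
  also have "\<dots> = (\<Sum>i\<in>UNIV. \<Sum>j\<in>UNIV. \<Sum>k\<in>UNIV. A$i$j * B$j$k * C$i$k)"
    by (rule sum.cong[OF refl], rule sum.swap)
  also have "\<dots> = A \<bullet> (C ** transpose B)"
    by (simp add: inner_vec_def matrix_matrix_mult_def transpose_def sum_distrib_left mult_ac)
  finally show ?thesis .
qed

lemma frob2_eq_power2_norm: "frob2 M = (norm M)\<^sup>2"
  unfolding power2_norm_eq_inner by (simp add: frob2_def inner_vec_def power2_eq_square)

lemma frob2_sum_le: "frob2 (\<Sum>j\<in>J. X j) \<le> real (card J) * (\<Sum>j\<in>J. frob2 (X j))"
proof -
  have "(norm (\<Sum>j\<in>J. X j))\<^sup>2 \<le> (\<Sum>j\<in>J. norm (X j))\<^sup>2"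
    by (intro power_mono norm_sum norm_ge_zero)
  also have "\<dots> \<le> real (card J) * (\<Sum>j\<in>J. (norm (X j))\<^sup>2)"
    by (metis sum_squared_le_sum_of_squares mult.commute)
  finally show ?thesis
    by (simp add: frob2_eq_power2_norm)
qed

text \<open>In the following lemmas \<open>S\<close> has orthonormal rows, so \<open>S\<^sup>T S\<close> is the orthogonal projection
  onto its row space and \<open>X - X S\<^sup>T S\<close> is the component of the rows of \<open>X\<close> orthogonal to it.\<close>

lemma inner_matrix_mult_orthonormal_rows:
  fixes S :: "real^'p^'d"
  assumes "S ** transpose S = mat 1"
  shows "(Y ** S) \<bullet> (Z ** S) = Y \<bullet> Z"
  using assms by (simp add: inner_matrix_mult_left flip: matrix_mul_assoc)

lemma frob2_row_space_pythagoras: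
  fixes S :: "real^'p^'d" and X :: "real^'p^'m"
  assumes orth: "S ** transpose S = mat 1"
  shows "frob2 X = frob2 (X ** transpose S) + frob2 (X - X ** transpose S ** S)"
proof -
  define Y where "Y = X ** transpose S"
  define E where "E = X - Y ** S"
  have "E ** transpose S = Y - Y ** (S ** transpose S)"
    by (simp add: E_def Y_def matrix_diff_rdistrib matrix_mul_assoc)
  then have "E ** transpose S = 0"
    using orth by simp
  then have "(Y ** S) \<bullet> E = 0"
    by (simp add: inner_matrix_mult_left)
  then have "X \<bullet> X = (Y ** S) \<bullet> (Y ** S) + E \<bullet> E"
    by (simp add: E_def inner_diff inner_commute)
  then show ?thesis
    using orth by (simp add: frob2_eq_power2_norm power2_norm_eq_inner
        inner_matrix_mult_orthonormal_rows Y_def E_def)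
qed

lemma frob2_le_if_add_in_row_space:
  fixes S :: "real^'p^'d" and T R :: "real^'p^'m"
  assumes orth: "S ** transpose S = mat 1" and row_space: "T + R = M ** S"
  shows "frob2 T \<le> frob2 (T ** transpose S) + frob2 R"
proof -
  let ?E = "\<lambda>X :: real^'p^'m. X - X ** transpose S ** S"
  have "M ** S ** transpose S ** S = M ** (S ** transpose S) ** S"
    by (simp add: matrix_mul_assoc)
  then have E_row_space: "?E (M ** S) = 0"
    using orth by simp
  have "?E T + ?E R = ?E (T + R)"
    by (simp add: matrix_add_rdistrib)
  also have "\<dots> = 0"
    unfolding row_space by (fact E_row_space)
  finally have "?E T = - ?E R"
    unfolding eq_neg_iff_add_eq_0 .
  then have "frob2 (?E T) = frob2 (?E R)"
    by (simp only: frob2_eq_power2_norm norm_minus_cancel)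
  also have "\<dots> \<le> frob2 R"
    using frob2_row_space_pythagoras[OF orth, of R] frob2_eq_power2_norm[of "R ** transpose S"]
    by simp
  finally show ?thesis
    using frob2_row_space_pythagoras[OF orth, of T] by simp
qed

lemma first_order_critical_row_space:
  assumes "first_order_critical Dl S"
  shows "(\<Sum>j\<in>UNIV. S j) + (\<Sum>j\<in>UNIV. Dl i j ** S j) = Lam Dl S i ** S i"
proof -
  have "(\<Sum>j\<in>UNIV. blkA Dl i j ** S j) = (\<Sum>j\<in>UNIV. S j) + (\<Sum>j\<in>UNIV. Dl i j ** S j)"
    by (simp add: blkA_def matrix_add_rdistrib sum.distrib)
  with assms show ?thesis
    unfolding first_order_critical_def by metis
qed

lemma first_order_critical_block_bound:
  fixes S :: "'n::finite \<Rightarrow> real^'p::finite^'d::finite"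
  assumes stiefel: "\<And>i. S i ** transpose (S i) = mat 1"
    and crit: "first_order_critical Dl S"
  shows "frob2 (\<Sum>j\<in>UNIV. S j)
           \<le> real CARD('n) * (\<Sum>j\<in>UNIV. frob2 (S j ** transpose (S i)))
             + frob2 (\<Sum>j\<in>UNIV. Dl i j ** S j)"
proof -
  have "frob2 (\<Sum>j\<in>UNIV. S j)
          \<le> frob2 ((\<Sum>j\<in>UNIV. S j) ** transpose (S i)) + frob2 (\<Sum>j\<in>UNIV. Dl i j ** S j)"
    using stiefel first_order_critical_row_space[OF crit] by (rule frob2_le_if_add_in_row_space)
  also have "(\<Sum>j\<in>UNIV. S j) ** transpose (S i) = (\<Sum>j\<in>UNIV. S j ** transpose (S i))"
    by (rule matrix_sum_rdistrib)
  also have "frob2 \<dots> \<le> real CARD('n) * (\<Sum>j\<in>UNIV. frob2 (S j ** transpose (S i)))"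
    by (rule frob2_sum_le)
  finally show ?thesis by simp
qed

theorem lemma7:
  fixes S :: "'n::finite \<Rightarrow> real^'p::finite^'d::finite"
    and Dl :: "'n \<Rightarrow> 'n \<Rightarrow> real^'d^'d"
  assumes p_gt_d: "CARD('p) > CARD('d)"
    and Dl_sym: "\<And>i j. Dl j i = transpose (Dl i j)"
    and Dl_diag: "\<And>i. Dl i i = 0"
    and stiefel: "\<And>i. S i ** transpose (S i) = mat 1"
    and crit: "first_order_critical Dl S"
  shows "(\<Sum>i\<in>UNIV. \<Sum>j\<in>UNIV. frob2 (S i ** transpose (S j)))
           \<ge> frob2 (\<Sum>i\<in>UNIV. S i)
             - (1 / real CARD('n)) * (\<Sum>i\<in>UNIV. frob2 (\<Sum>j\<in>UNIV. Dl i j ** S j))"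
proof -
  define n where "n = real CARD('n)"
  have "n * frob2 (\<Sum>j\<in>UNIV. S j) = (\<Sum>i\<in>(UNIV::'n set). frob2 (\<Sum>j\<in>UNIV. S j))"
    by (simp add: n_def)
  also have "\<dots> \<le> (\<Sum>i\<in>UNIV. n * (\<Sum>j\<in>UNIV. frob2 (S j ** transpose (S i)))
                                + frob2 (\<Sum>j\<in>UNIV. Dl i j ** S j))"
    unfolding n_def by (intro sum_mono first_order_critical_block_bound[OF stiefel crit])
  also have "\<dots> = n * (\<Sum>i\<in>UNIV. \<Sum>j\<in>UNIV. frob2 (S j ** transpose (S i)))
                  + (\<Sum>i\<in>UNIV. frob2 (\<Sum>j\<in>UNIV. Dl i j ** S j))"
    by (simp add: sum.distrib sum_distrib_left)
  also have "(\<Sum>i\<in>UNIV. \<Sum>j\<in>UNIV. frob2 (S j ** transpose (S i)))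
               = (\<Sum>i\<in>UNIV. \<Sum>j\<in>UNIV. frob2 (S i ** transpose (S j)))"
    by (rule sum.swap)
  finally show ?thesis
    by (simp add: n_def field_simps)
qed

end
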